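(* Let $\mathcal{A}=(\Sigma,Q,\delta,q_0,F)$ be a WDBA with $L:=L(\mathcal{A})$ and let $D\subseteq\Sigma^\omega$ be a regular set of don't care words with trivial right-congruence. Then $\mathcal{A}$ is $D$-minimal if and only if $\mathcal{A}$ has informative $D$-congruence.
   Context: A DBA $(\Sigma,Q,\delta,q_0,F)$ is a finite deterministic transition system (all states reachable) with $F\subseteq Q$, accepting $\alpha\in\Sigma^\omega$ iff some state of $F$ is visited infinitely often in the run on $\alpha$. A WDBA is a DBA in which every maximal strongly connected component of states is either contained in $F$ or disjoint from $F$. $L\equiv_D L'$ means $L\setminus D=L'\setminus D$. A WDBA $\mathcal{A}$ is $D$-minimal if there is no WDBA $\mathcal{B}$ with fewer states and $L(\mathcal{B})\equiv_D L(\mathcal{A})$. For $L\subseteq\Sigma^\omega$, $u\sim_L v$ iff for all $\alpha$: $u\alpha\in L\iff v\alpha\in L$; $D$ has trivial right-congruence if $\sim_D$ has exactly one class. $w\sim_{L,D}w'$ iff for all $\alpha\in\Sigma^\omega\setminus D$: $w\alpha\in L\iff w'\alpha\in L$; this is a right-congruence, and $\mathcal{T}_{L,D}$ is its induced transition system (states the classes $[u]$, initial $[\epsilon]$, transitions $[u]\xrightarrow{\sigma}[u\sigma]$). $\mathcal{A}$ has informative $D$-congruence if its transition system is isomorphic to $\mathcal{T}_{L(\mathcal{A}),D}$. *)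

theory Defs
  imports Main "HOL-Library.Omega_Words_Fun"
begin

text \<open>Alphabet: a finite type 'a (so Sigma = UNIV, Sigma^omega = all 'a word).
  A DBA is given by (Q, delta, q0, F) with states of type 'q.\<close>

record ('q, 'a) dba =
  states :: "'q set"
  trans  :: "'q \<Rightarrow> 'a \<Rightarrow> 'q"
  init   :: "'q"
  acc    :: "'q set"

fun trans_star :: "('q \<Rightarrow> 'a \<Rightarrow> 'q) \<Rightarrow> 'q \<Rightarrow> 'a list \<Rightarrow> 'q" where
  "trans_star d q [] = q"
| "trans_star d q (a # u) = trans_star d (d q a) u"

definition is_dba :: "('q, 'a::finite) dba \<Rightarrow> bool" where
  "is_dba A \<longleftrightarrow> finite (states A) \<and> init A \<in> states A
     \<and> (\<forall>q\<in>states A. \<forall>a. trans A q a \<in> states A)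
     \<and> acc A \<subseteq> states A
     \<and> (\<forall>q\<in>states A. \<exists>u. trans_star (trans A) (init A) u = q)"

fun run :: "('q, 'a) dba \<Rightarrow> 'a word \<Rightarrow> nat \<Rightarrow> 'q" where
  "run A w 0 = init A"
| "run A w (Suc n) = trans A (run A w n) (w n)"

definition dba_lang :: "('q, 'a) dba \<Rightarrow> 'a word set" where
  "dba_lang A = {w. \<exists>q\<in>acc A. \<exists>\<^sub>\<infinity> n. run A w n = q}"

definition reach :: "('q, 'a) dba \<Rightarrow> 'q \<Rightarrow> 'q \<Rightarrow> bool" where
  "reach A p q \<longleftrightarrow> (\<exists>u. trans_star (trans A) p u = q)"

definition strongly_connected :: "('q, 'a) dba \<Rightarrow> 'q set \<Rightarrow> bool" where
  "strongly_connected A C \<longleftrightarrow> C \<subseteq> states A \<and> C \<noteq> {} \<and> (\<forall>p\<in>C. \<forall>q\<in>C. reach A p q)"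

definition max_scc :: "('q, 'a) dba \<Rightarrow> 'q set \<Rightarrow> bool" where
  "max_scc A C \<longleftrightarrow> strongly_connected A C
     \<and> (\<forall>C'. strongly_connected A C' \<and> C \<subseteq> C' \<longrightarrow> C' = C)"

definition is_wdba :: "('q, 'a::finite) dba \<Rightarrow> bool" where
  "is_wdba A \<longleftrightarrow> is_dba A \<and> (\<forall>C. max_scc A C \<longrightarrow> C \<subseteq> acc A \<or> C \<inter> acc A = {})"

definition eq_mod :: "'a word set \<Rightarrow> 'a word set \<Rightarrow> 'a word set \<Rightarrow> bool" where
  "eq_mod D L L' \<longleftrightarrow> L - D = L' - D"

text \<open>D-minimality. Competing automata have states of type nat, which is no loss of
  generality since every finite state set can be renamed into nat.\<close>
definition D_minimal :: "'a word set \<Rightarrow> ('q, 'a::finite) dba \<Rightarrow> bool" where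
  "D_minimal D A \<longleftrightarrow>
     \<not> (\<exists>B :: (nat, 'a) dba. is_wdba B \<and> card (states B) < card (states A)
            \<and> eq_mod D (dba_lang B) (dba_lang A))"

text \<open>omega-regular languages: recognised by a nondeterministic Buechi automaton
  (states of type nat, wlog).\<close>
definition nba_accepts ::
  "nat set \<Rightarrow> nat set \<Rightarrow> (nat \<Rightarrow> 'a \<Rightarrow> nat set) \<Rightarrow> nat set \<Rightarrow> 'a word \<Rightarrow> bool" where
  "nba_accepts Q I T F w \<longleftrightarrow>
     (\<exists>r. r 0 \<in> I \<and> (\<forall>n. r n \<in> Q \<and> r (Suc n) \<in> T (r n) (w n))
          \<and> (\<exists>q\<in>F. \<exists>\<^sub>\<infinity> n. r n = q))"

definition omega_regular :: "'a::finite word set \<Rightarrow> bool" where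
  "omega_regular L \<longleftrightarrow>
     (\<exists>Q I T F. finite Q \<and> I \<subseteq> Q \<and> F \<subseteq> Q \<and> (\<forall>q a. T q a \<subseteq> Q)
        \<and> L = {w. nba_accepts Q I T F w})"

definition right_cong :: "'a word set \<Rightarrow> 'a list \<Rightarrow> 'a list \<Rightarrow> bool" where
  "right_cong L u v \<longleftrightarrow> (\<forall>\<alpha>. u \<frown> \<alpha> \<in> L \<longleftrightarrow> v \<frown> \<alpha> \<in> L)"

definition trivial_right_cong :: "'a word set \<Rightarrow> bool" where
  "trivial_right_cong L \<longleftrightarrow> (\<forall>u v. right_cong L u v)"

definition cong_LD :: "'a word set \<Rightarrow> 'a word set \<Rightarrow> ('a list \<times> 'a list) set" where
  "cong_LD L D = {(w, w'). \<forall>\<alpha>. \<alpha> \<notin> D \<longrightarrow> (w \<frown> \<alpha> \<in> L \<longleftrightarrow> w' \<frown> \<alpha> \<in> L)}"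

text \<open>Induced transition system T_{L,D}: states are the classes, initial [eps],
  transitions [u] --a--> [u a] (well defined since cong_LD is a right congruence).\<close>
definition TLD_states :: "'a word set \<Rightarrow> 'a word set \<Rightarrow> 'a list set set" where
  "TLD_states L D = UNIV // cong_LD L D"

definition TLD_init :: "'a word set \<Rightarrow> 'a word set \<Rightarrow> 'a list set" where
  "TLD_init L D = cong_LD L D `` {[]}"

definition TLD_trans :: "'a word set \<Rightarrow> 'a word set \<Rightarrow> 'a list set \<Rightarrow> 'a \<Rightarrow> 'a list set" where
  "TLD_trans L D C a = cong_LD L D `` {(SOME u. u \<in> C) @ [a]}"

definition ts_iso ::
  "'p set \<Rightarrow> ('p \<Rightarrow> 'a \<Rightarrow> 'p) \<Rightarrow> 'p \<Rightarrow> 'r set \<Rightarrow> ('r \<Rightarrow> 'a \<Rightarrow> 'r) \<Rightarrow> 'r \<Rightarrow> bool" where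
  "ts_iso Q d q0 Q' d' q0' \<longleftrightarrow>
     (\<exists>f. bij_betw f Q Q' \<and> f q0 = q0' \<and> (\<forall>q\<in>Q. \<forall>a. f (d q a) = d' (f q) a))"

definition informative_D_cong :: "'a word set \<Rightarrow> ('q, 'a) dba \<Rightarrow> bool" where
  "informative_D_cong D A \<longleftrightarrow>
     ts_iso (states A) (trans A) (init A)
            (TLD_states (dba_lang A) D) (TLD_trans (dba_lang A) D) (TLD_init (dba_lang A) D)"

end

theory Submission
  imports Defs
begin

text \<open>Because D is invariant under prepending finite words, the relation "accepts the same
  words outside D" between states of A is a congruence. Quotienting A by it gives a weak
  automaton that agrees with A outside D, provided a class is declared accepting iff its
  quotient SCC contains a state that recurrently accepts some word outside D. This choice is
  consistent by weakness: if such a quotient SCC also carried a recurrently rejecting run, the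
  states of A that can still return to it would form a set from each of whose members both
  accepting and rejecting members are reachable, and a bottom SCC of this set would mix accepting
  and rejecting states. Hence a D-minimal A has no two distinct equivalent states, which makes
  q \<mapsto> {u. \<delta>(q0, u) equivalent to q} an isomorphism onto T_{L,D}. Conversely, any automaton
  agreeing with A outside D induces the same congruence \<sim>_{L,D}, whose classes are determined
  by the states reached, so it has at least as many states as T_{L,D}.\<close>

lemma trans_star_append: "trans_star d q (u @ v) = trans_star d (trans_star d q u) v"
  by (induction u arbitrary: q) auto

lemma prefix_add: "prefix (m + n) w = prefix m w @ prefix n (suffix m w)"
  using subsequence_append[where i=m and j=n and w=w]
    subsequence_prefix_suffix[where j="m + n" and i=m and w=w] by simp

lemma run_eq_trans_star: "run B w n = trans_star (trans B) (init B) (prefix n w)"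
  by (induction n) (auto simp: trans_star_append)

lemma INFM_add_iff: "(\<exists>\<^sub>\<infinity>n. P (k + n)) \<longleftrightarrow> (\<exists>\<^sub>\<infinity>n::nat. P n)"
  using eventually_sequentially_seg[of "\<lambda>n. \<not> P n" k]
  by (simp add: frequently_def cofinite_eq_sequentially add.commute)

lemma INFM_finite_range_value:
  assumes "finite S" "\<And>n. f n \<in> S" "\<exists>\<^sub>\<infinity>n. P (f n)"
  obtains p where "p \<in> S" "P p" "\<exists>\<^sub>\<infinity>n. f n = p"
proof -
  have "\<exists>\<^sub>\<infinity>n. \<exists>p\<in>S. f n = p \<and> P p"
    using assms(3) by (rule INFM_mono) (use assms(2) in blast)
  then obtain p where p: "p \<in> S" "\<exists>\<^sub>\<infinity>n. f n = p \<and> P p"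
    using INFM_finite_Bex_distrib[OF assms(1), of "\<lambda>p n. f n = p \<and> P p"] by blast
  have "P p"
    using INFM_EX[OF p(2)] by blast
  moreover have "\<exists>\<^sub>\<infinity>n. f n = p"
    using p(2) by (rule INFM_mono) blast
  ultimately show thesis
    using that p(1) by blast
qed

lemma trans_star_in_states:
  "is_dba B \<Longrightarrow> p \<in> states B \<Longrightarrow> trans_star (trans B) p u \<in> states B"
  by (induction u arbitrary: p) (auto simp: is_dba_def)

lemma run_in_states: "is_dba B \<Longrightarrow> run B w n \<in> states B"
  by (simp add: run_eq_trans_star trans_star_in_states is_dba_def)

lemma reach_refl: "reach B p p"
  unfolding reach_def by (metis trans_star.simps(1))

lemma reach_trans: "reach B p q \<Longrightarrow> reach B q r \<Longrightarrow> reach B p r"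
  unfolding reach_def by (metis trans_star_append)

lemma reach_trans_star: "reach B p (trans_star (trans B) p u)"
  unfolding reach_def by blast

lemma reach_in_states: "is_dba B \<Longrightarrow> p \<in> states B \<Longrightarrow> reach B p q \<Longrightarrow> q \<in> states B"
  unfolding reach_def by (auto intro: trans_star_in_states)

definition accepts_from :: "('q, 'a) dba \<Rightarrow> 'q \<Rightarrow> 'a word \<Rightarrow> bool" where
  "accepts_from B q \<alpha> \<longleftrightarrow> (\<exists>\<^sub>\<infinity>n. trans_star (trans B) q (prefix n \<alpha>) \<in> acc B)"

lemma accepts_from_conc:
  "accepts_from B q (u \<frown> \<alpha>) \<longleftrightarrow> accepts_from B (trans_star (trans B) q u) \<alpha>"
proof -
  have "accepts_from B q (u \<frown> \<alpha>) \<longleftrightarrow>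
      (\<exists>\<^sub>\<infinity>n. trans_star (trans B) q (prefix (length u + n) (u \<frown> \<alpha>)) \<in> acc B)"
    unfolding accepts_from_def by (rule INFM_add_iff[symmetric])
  then show ?thesis
    unfolding accepts_from_def by (simp add: trans_star_append)
qed

lemma accepts_from_suffix:
  "accepts_from B q \<alpha> \<longleftrightarrow> accepts_from B (trans_star (trans B) q (prefix m \<alpha>)) (suffix m \<alpha>)"
  by (metis accepts_from_conc prefix_suffix)

lemma ex_prefix_acc_iff_accepts_from:
  "\<exists>n. trans_star (trans B) q (prefix n \<alpha>) \<in> acc B \<longleftrightarrow> accepts_from B q \<alpha>"
proof (cases "accepts_from B q \<alpha>")
  case True
  then show ?thesis unfolding accepts_from_def using INFM_EX by blast
next
  case False
  then have "\<exists>\<^sub>\<infinity>n. trans_star (trans B) q (prefix n \<alpha>) \<notin> acc B"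
    unfolding accepts_from_def by (simp add: MOST_INFM)
  then show ?thesis using False INFM_EX by blast
qed

lemma dba_lang_iff_accepts_from:
  assumes "finite (acc B)"
  shows "\<alpha> \<in> dba_lang B \<longleftrightarrow> accepts_from B (init B) \<alpha>"
proof -
  have "\<alpha> \<in> dba_lang B \<longleftrightarrow> (\<exists>q\<in>acc B. \<exists>\<^sub>\<infinity>n. trans_star (trans B) (init B) (prefix n \<alpha>) = q)"
    unfolding dba_lang_def by (simp add: run_eq_trans_star)
  also have "\<dots> \<longleftrightarrow> (\<exists>\<^sub>\<infinity>n. \<exists>q\<in>acc B. trans_star (trans B) (init B) (prefix n \<alpha>) = q)"
    by (rule INFM_finite_Bex_distrib[OF assms, symmetric])
  finally show ?thesis
    unfolding accepts_from_def by simp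
qed

lemma conc_in_dba_lang_iff:
  assumes "is_dba B"
  shows "u \<frown> \<alpha> \<in> dba_lang B \<longleftrightarrow> accepts_from B (trans_star (trans B) (init B) u) \<alpha>"
proof -
  have "finite (acc B)"
    using assms finite_subset unfolding is_dba_def by blast
  then show ?thesis
    by (simp add: dba_lang_iff_accepts_from accepts_from_conc)
qed

lemma is_wdba_iff:
  assumes "is_dba B"
  shows "is_wdba B \<longleftrightarrow>
    (\<forall>p\<in>states B. \<forall>q. reach B p q \<and> reach B q p \<longrightarrow> (p \<in> acc B \<longleftrightarrow> q \<in> acc B))"
proof
  assume wdba: "is_wdba B"
  show "\<forall>p\<in>states B. \<forall>q. reach B p q \<and> reach B q p \<longrightarrow> (p \<in> acc B \<longleftrightarrow> q \<in> acc B)"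
  proof (intro ballI allI impI)
    fix p q assume p: "p \<in> states B" and pq: "reach B p q \<and> reach B q p"
    define C where "C = {r \<in> states B. reach B p r \<and> reach B r p}"
    have pC: "p \<in> C"
      using p reach_refl unfolding C_def by fast
    have qC: "q \<in> C"
      using p pq reach_in_states[OF assms] unfolding C_def by blast
    have "strongly_connected B C"
      unfolding strongly_connected_def using pC by (auto simp: C_def intro: reach_trans)
    moreover have "C' = C" if "strongly_connected B C'" "C \<subseteq> C'" for C'
      using that pC unfolding strongly_connected_def C_def by blast
    ultimately have "max_scc B C"
      unfolding max_scc_def by blast
    then show "p \<in> acc B \<longleftrightarrow> q \<in> acc B"
      using wdba pC qC unfolding is_wdba_def by blast
  qed
next
  assume acc_invariant:
    "\<forall>p\<in>states B. \<forall>q. reach B p q \<and> reach B q p \<longrightarrow> (p \<in> acc B \<longleftrightarrow> q \<in> acc B)"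
  have "C \<subseteq> acc B \<or> C \<inter> acc B = {}" if "max_scc B C" for C
  proof -
    have "C \<subseteq> states B" "\<forall>x\<in>C. \<forall>y\<in>C. reach B x y"
      using that unfolding max_scc_def strongly_connected_def by simp_all
    then have "x \<in> acc B \<longleftrightarrow> y \<in> acc B" if "x \<in> C" "y \<in> C" for x y
      using acc_invariant that by blast
    then show ?thesis by blast
  qed
  then show "is_wdba B"
    using assms unfolding is_wdba_def by blast
qed

lemma finite_preorder_has_bottom:
  assumes "finite X" "x \<in> X" "\<And>x. r x x" "\<And>x y z. r x y \<Longrightarrow> r y z \<Longrightarrow> r x z"
  obtains s where "s \<in> X" "\<And>s'. s' \<in> X \<Longrightarrow> r s s' \<Longrightarrow> r s' s"
proof -
  obtain s where s: "s \<in> X"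
    and least: "\<And>y. y \<in> X \<Longrightarrow> card {z\<in>X. r s z} \<le> card {z\<in>X. r y z}"
    using ex_has_least_nat[of "\<lambda>s. s \<in> X" x "\<lambda>s. card {z\<in>X. r s z}"] assms(2) by blast
  have "r s' s" if s': "s' \<in> X" "r s s'" for s'
  proof -
    have "{z\<in>X. r s' z} \<subseteq> {z\<in>X. r s z}"
      using s' assms(4) by blast
    then have "{z\<in>X. r s' z} = {z\<in>X. r s z}"
      using least[OF s'(1)] assms(1) by (intro card_seteq) auto
    then show "r s' s"
      using s assms(3) by blast
  qed
  then show thesis using that s by blast
qed

text \<open>A bottom SCC of X would contain both accepting and rejecting states.\<close>

lemma wdba_no_mixed_trap:
  assumes wdba: "is_wdba B" and "X \<subseteq> states B"
    and to_acc: "\<And>s. s \<in> X \<Longrightarrow> \<exists>t\<in>X \<inter> acc B. reach B s t"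
    and to_rej: "\<And>s. s \<in> X \<Longrightarrow> \<exists>t\<in>X - acc B. reach B s t"
  shows "X = {}"
proof (rule ccontr)
  assume "X \<noteq> {}"
  then obtain x where "x \<in> X"
    by blast
  have dba: "is_dba B"
    using wdba unfolding is_wdba_def by blast
  then have "finite X"
    using assms(2) finite_subset unfolding is_dba_def by blast
  then obtain s where s: "s \<in> X"
    and bottom: "\<And>s'. s' \<in> X \<Longrightarrow> reach B s s' \<Longrightarrow> reach B s' s"
  proof (rule finite_preorder_has_bottom[of X x "reach B"])
    show "x \<in> X" by fact
    show "reach B y y" for y by (rule reach_refl)
    show "reach B y w" if "reach B y z" "reach B z w" for y z w
      using that by (rule reach_trans)
  qed blast
  obtain t1 where t1: "t1 \<in> X \<inter> acc B" "reach B s t1"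
    using to_acc[OF s] by blast
  obtain t2 where t2: "t2 \<in> X - acc B" "reach B s t2"
    using to_rej[OF s] by blast
  have "reach B t1 s" "reach B t2 s"
    using t1 t2 bottom by blast+
  then have "reach B t1 t2" "reach B t2 t1"
    using reach_trans[OF _ t2(2)] reach_trans[OF _ t1(2)] by blast+
  moreover have "t1 \<in> states B"
    using t1 assms(2) by blast
  ultimately show False
    using wdba t1 t2 unfolding is_wdba_iff[OF dba] by blast
qed

definition rename_dba :: "('p \<Rightarrow> 'r) \<Rightarrow> ('p, 'a) dba \<Rightarrow> ('r, 'a) dba" where
  "rename_dba g B = \<lparr>states = g ` states B,
     trans = (\<lambda>i a. g (trans B (inv_into (states B) g i) a)),
     init = g (init B), acc = g ` acc B\<rparr>"

context
  fixes g :: "'p \<Rightarrow> 'r" and B :: "('p, 'a::finite) dba"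
  assumes dba: "is_dba B" and inj: "inj_on g (states B)"
begin

lemma trans_rename_dba: "p \<in> states B \<Longrightarrow> trans (rename_dba g B) (g p) a = g (trans B p a)"
  using inj by (simp add: rename_dba_def)

lemma trans_star_rename_dba:
  "p \<in> states B \<Longrightarrow> trans_star (trans (rename_dba g B)) (g p) u = g (trans_star (trans B) p u)"
proof (induction u arbitrary: p)
  case (Cons a u)
  then show ?case
    using dba by (simp add: trans_rename_dba is_dba_def)
qed simp

lemma run_rename_dba: "run (rename_dba g B) w n = g (run B w n)"
proof (induction n)
  case 0
  then show ?case by (simp add: rename_dba_def)
next
  case (Suc n)
  then show ?case by (simp add: trans_rename_dba run_in_states[OF dba])
qed

lemma dba_lang_rename_dba: "dba_lang (rename_dba g B) = dba_lang B"
proof -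
  have "acc B \<subseteq> states B"
    using dba unfolding is_dba_def by blast
  then have "g (run B w n) = g q \<longleftrightarrow> run B w n = q" if "q \<in> acc B" for w n q
    using that inj run_in_states[OF dba] by (meson inj_on_eq_iff subsetD)
  then show ?thesis
    unfolding dba_lang_def run_rename_dba by (auto simp: rename_dba_def)
qed

lemma is_dba_rename_dba: "is_dba (rename_dba g B)"
  unfolding is_dba_def
proof (intro conjI ballI allI)
  show "finite (states (rename_dba g B))" "init (rename_dba g B) \<in> states (rename_dba g B)"
    "acc (rename_dba g B) \<subseteq> states (rename_dba g B)"
    using dba by (auto simp: rename_dba_def is_dba_def)
next
  fix i a assume "i \<in> states (rename_dba g B)"
  then obtain p where "p \<in> states B" "i = g p"
    by (auto simp: rename_dba_def)
  then show "trans (rename_dba g B) i a \<in> states (rename_dba g B)"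
    using dba by (simp add: trans_rename_dba) (simp add: rename_dba_def is_dba_def)
next
  fix i assume "i \<in> states (rename_dba g B)"
  then obtain p where "p \<in> states B" "i = g p"
    by (auto simp: rename_dba_def)
  moreover obtain u where "trans_star (trans B) (init B) u = p"
    using dba \<open>p \<in> states B\<close> unfolding is_dba_def by blast
  ultimately show "\<exists>u. trans_star (trans (rename_dba g B)) (init (rename_dba g B)) u = i"
    using trans_star_rename_dba[of "init B" u] dba by (auto simp: rename_dba_def is_dba_def)
qed

lemma reach_rename_dba_iff:
  assumes "p \<in> states B" "q \<in> states B"
  shows "reach (rename_dba g B) (g p) (g q) \<longleftrightarrow> reach B p q"
  using assms inj trans_star_rename_dba trans_star_in_states[OF dba]
  unfolding reach_def by (metis inj_on_eq_iff)

lemma is_wdba_rename_dba: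
  assumes "is_wdba B"
  shows "is_wdba (rename_dba g B)"
  unfolding is_wdba_iff[OF is_dba_rename_dba]
proof (intro ballI allI impI)
  fix i j assume i: "i \<in> states (rename_dba g B)"
    and ij: "reach (rename_dba g B) i j \<and> reach (rename_dba g B) j i"
  then have "j \<in> states (rename_dba g B)"
    using reach_in_states[OF is_dba_rename_dba] by blast
  then obtain p q where pq: "p \<in> states B" "q \<in> states B" "i = g p" "j = g q"
    using i by (auto simp: rename_dba_def)
  then have "p \<in> acc B \<longleftrightarrow> q \<in> acc B"
    using assms ij reach_rename_dba_iff unfolding is_wdba_iff[OF dba] by blast
  moreover have "acc B \<subseteq> states B"
    using dba unfolding is_dba_def by blast
  ultimately show "i \<in> acc (rename_dba g B) \<longleftrightarrow> j \<in> acc (rename_dba g B)"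
    using pq inj by (simp add: rename_dba_def inj_on_image_mem_iff)
qed

end

lemma ex_nat_wdba_eq_lang:
  fixes B :: "('p, 'a::finite) dba"
  assumes "is_wdba B"
  obtains C :: "(nat, 'a) dba"
  where "is_wdba C" "card (states C) = card (states B)" "dba_lang C = dba_lang B"
proof -
  have dba: "is_dba B"
    using assms unfolding is_wdba_def by blast
  then have "finite (states B)"
    unfolding is_dba_def by blast
  then obtain g :: "'p \<Rightarrow> nat" where inj: "inj_on g (states B)"
    using finite_imp_inj_to_nat_seg by blast
  show thesis
  proof (rule that)
    show "is_wdba (rename_dba g B)"
      by (rule is_wdba_rename_dba[OF dba inj assms])
    show "card (states (rename_dba g B)) = card (states B)"
      using card_image[OF inj] by (simp add: rename_dba_def)
    show "dba_lang (rename_dba g B) = dba_lang B"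
      by (rule dba_lang_rename_dba[OF dba inj])
  qed
qed

lemma conc_mem_iff_of_trivial_right_cong:
  assumes "trivial_right_cong D"
  shows "u \<frown> \<alpha> \<in> D \<longleftrightarrow> \<alpha> \<in> D"
proof -
  have "right_cong D u []"
    using assms unfolding trivial_right_cong_def by blast
  then show ?thesis
    unfolding right_cong_def by simp
qed

lemma cong_LD_eq_if_eq_mod:
  assumes "trivial_right_cong D" "eq_mod D L L'"
  shows "cong_LD L D = cong_LD L' D"
proof -
  have "u \<frown> \<alpha> \<in> L \<longleftrightarrow> u \<frown> \<alpha> \<in> L'" if "\<alpha> \<notin> D" for u \<alpha>
  proof -
    have "u \<frown> \<alpha> \<notin> D"
      using that conc_mem_iff_of_trivial_right_cong[OF assms(1)] by simp
    then show ?thesis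
      using assms(2) unfolding eq_mod_def by blast
  qed
  then show ?thesis
    unfolding cong_LD_def by auto
qed

lemma card_TLD_states_le:
  assumes "is_dba B"
  shows "card (TLD_states (dba_lang B) D) \<le> card (states B)"
proof -
  let ?E = "cong_LD (dba_lang B) D" and ?q = "trans_star (trans B) (init B)"
  have same_class: "?E `` {u} = ?E `` {v}" if "?q u = ?q v" for u v
  proof -
    have "(u, w) \<in> ?E \<longleftrightarrow> (v, w) \<in> ?E" for w
      unfolding cong_LD_def using that by (simp add: conc_in_dba_lang_iff[OF assms])
    then show ?thesis by blast
  qed
  have "TLD_states (dba_lang B) D \<subseteq> (\<lambda>q. ?E `` {SOME u. ?q u = q}) ` states B"
  proof
    fix X assume "X \<in> TLD_states (dba_lang B) D"
    then obtain u where X: "X = ?E `` {u}"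
      unfolding TLD_states_def quotient_def by blast
    have "?q (SOME v. ?q v = ?q u) = ?q u"
      by (rule someI) (rule refl)
    from same_class[OF this] have "X = ?E `` {SOME v. ?q v = ?q u}"
      using X by simp
    moreover have "?q u \<in> states B"
      using assms by (simp add: trans_star_in_states is_dba_def)
    ultimately show "X \<in> (\<lambda>q. ?E `` {SOME u. ?q u = q}) ` states B"
      by (intro rev_image_eqI)
  qed
  moreover have "finite (states B)"
    using assms unfolding is_dba_def by blast
  ultimately show ?thesis
    by (intro surj_card_le)
qed

lemma D_minimal_if_informative_D_cong:
  fixes A :: "('q, 'a::finite) dba"
  assumes "trivial_right_cong D" "informative_D_cong D A"
  shows "D_minimal D A"
  unfolding D_minimal_def
proof
  assume "\<exists>B :: (nat, 'a) dba. is_wdba B \<and> card (states B) < card (states A)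
            \<and> eq_mod D (dba_lang B) (dba_lang A)"
  then obtain B :: "(nat, 'a) dba" where B: "is_wdba B" "card (states B) < card (states A)"
    "eq_mod D (dba_lang B) (dba_lang A)" by blast
  have "card (states A) = card (TLD_states (dba_lang A) D)"
    using assms(2) bij_betw_same_card unfolding informative_D_cong_def ts_iso_def by blast
  also have "\<dots> = card (TLD_states (dba_lang B) D)"
    using cong_LD_eq_if_eq_mod[OF assms(1) B(3)] by (simp add: TLD_states_def)
  also have "\<dots> \<le> card (states B)"
    using B(1) card_TLD_states_le unfolding is_wdba_def by blast
  finally show False
    using B(2) by simp
qed

locale wdba_dont_care =
  fixes A :: "('q, 'a::finite) dba" and D :: "'a word set"
  assumes wdba: "is_wdba A" and trivial_cong_D: "trivial_right_cong D"
begin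

abbreviation \<delta> :: "'q \<Rightarrow> 'a list \<Rightarrow> 'q" where
  "\<delta> \<equiv> trans_star (trans A)"

lemma dba: "is_dba A"
  using wdba unfolding is_wdba_def by blast

lemma finite_states: "finite (states A)"
  using dba unfolding is_dba_def by blast

lemma init_in_states: "init A \<in> states A"
  using dba unfolding is_dba_def by blast

lemma \<delta>_in_states: "q \<in> states A \<Longrightarrow> \<delta> q u \<in> states A"
  by (rule trans_star_in_states[OF dba])

lemma ex_access_word: "q \<in> states A \<Longrightarrow> \<exists>u. \<delta> (init A) u = q"
  using dba unfolding is_dba_def by blast

lemma conc_mem_D_iff: "u \<frown> \<alpha> \<in> D \<longleftrightarrow> \<alpha> \<in> D"
  by (rule conc_mem_iff_of_trivial_right_cong[OF trivial_cong_D])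

lemma suffix_notin_D: "\<alpha> \<notin> D \<Longrightarrow> suffix m \<alpha> \<notin> D"
  by (metis conc_mem_D_iff prefix_suffix)

definition D_equiv :: "'q \<Rightarrow> 'q \<Rightarrow> bool" where
  "D_equiv p q \<longleftrightarrow> (\<forall>\<alpha>. \<alpha> \<notin> D \<longrightarrow> (accepts_from A p \<alpha> \<longleftrightarrow> accepts_from A q \<alpha>))"

lemma D_equiv_refl [simp]: "D_equiv p p"
  by (simp add: D_equiv_def)

lemma D_equiv_sym: "D_equiv p q \<Longrightarrow> D_equiv q p"
  by (simp add: D_equiv_def)

lemma D_equiv_trans: "D_equiv p q \<Longrightarrow> D_equiv q r \<Longrightarrow> D_equiv p r"
  by (simp add: D_equiv_def)

lemma D_equiv_trans_star:
  assumes "D_equiv p q"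
  shows "D_equiv (\<delta> p u) (\<delta> q u)"
  unfolding D_equiv_def
proof (intro allI impI)
  fix \<alpha> assume "\<alpha> \<notin> D"
  then have "u \<frown> \<alpha> \<notin> D"
    by (simp add: conc_mem_D_iff)
  then show "accepts_from A (\<delta> p u) \<alpha> \<longleftrightarrow> accepts_from A (\<delta> q u) \<alpha>"
    using assms unfolding D_equiv_def accepts_from_conc[symmetric] by blast
qed

lemma cong_LD_iff_D_equiv:
  "(u, v) \<in> cong_LD (dba_lang A) D \<longleftrightarrow> D_equiv (\<delta> (init A) u) (\<delta> (init A) v)"
  unfolding cong_LD_def D_equiv_def by (simp add: conc_in_dba_lang_iff[OF dba])

definition D_reach :: "'q \<Rightarrow> 'q \<Rightarrow> bool" where
  "D_reach p q \<longleftrightarrow> (\<exists>u. D_equiv (\<delta> p u) q)"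

lemma reach_imp_D_reach: "reach A p q \<Longrightarrow> D_reach p q"
  unfolding reach_def D_reach_def using D_equiv_refl by blast

lemma D_reach_refl: "D_reach p p"
  by (rule reach_imp_D_reach[OF reach_refl])

lemma D_reach_trans:
  assumes "D_reach p q" "D_reach q r"
  shows "D_reach p r"
proof -
  obtain u v where u: "D_equiv (\<delta> p u) q" and v: "D_equiv (\<delta> q v) r"
    using assms unfolding D_reach_def by blast
  have "D_equiv (\<delta> p (u @ v)) (\<delta> q v)"
    using D_equiv_trans_star[OF u, of v] by (simp add: trans_star_append)
  then show ?thesis
    unfolding D_reach_def using D_equiv_trans[OF _ v] by blast
qed

lemma D_reach_D_equiv_left:
  assumes "D_equiv p p'" "D_reach p' r"
  shows "D_reach p r"
proof -
  obtain u where "D_equiv (\<delta> p' u) r"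
    using assms(2) unfolding D_reach_def by blast
  then have "D_equiv (\<delta> p u) r"
    by (rule D_equiv_trans[OF D_equiv_trans_star[OF assms(1)]])
  then show ?thesis
    unfolding D_reach_def by blast
qed

lemma D_reach_D_equiv_right:
  assumes "D_reach p q" "D_equiv q q'"
  shows "D_reach p q'"
proof -
  obtain u where "D_equiv (\<delta> p u) q"
    using assms(1) unfolding D_reach_def by blast
  then have "D_equiv (\<delta> p u) q'"
    by (rule D_equiv_trans[OF _ assms(2)])
  then show ?thesis
    unfolding D_reach_def by blast
qed

definition recurrent :: "'q \<Rightarrow> 'a word \<Rightarrow> bool" where
  "recurrent p \<alpha> \<longleftrightarrow> (\<forall>k. reach A (\<delta> p (prefix k \<alpha>)) p)"

lemma recurrent_suffix:
  assumes inf: "\<exists>\<^sub>\<infinity>n. \<delta> q (prefix n \<alpha>) = p" and at_m: "\<delta> q (prefix m \<alpha>) = p"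
  shows "recurrent p (suffix m \<alpha>)"
  unfolding recurrent_def
proof
  fix k
  obtain j where "j \<ge> m + k" "\<delta> q (prefix j \<alpha>) = p"
    using inf unfolding INFM_nat_le by blast
  then have "\<delta> (\<delta> q (prefix (m + k) \<alpha>)) (prefix (j - (m + k)) (suffix (m + k) \<alpha>)) = p"
    by (metis le_add_diff_inverse prefix_add trans_star_append)
  moreover have "\<delta> q (prefix (m + k) \<alpha>) = \<delta> p (prefix k (suffix m \<alpha>))"
    using at_m by (simp add: prefix_add trans_star_append)
  ultimately show "reach A (\<delta> p (prefix k (suffix m \<alpha>))) p"
    unfolding reach_def by metis
qed

lemma D_reach_via_recurrent:
  assumes "D_reach s p" "\<alpha> \<notin> D" "recurrent p \<alpha>"
  obtains t where "reach A s t" "D_reach t p" "t \<in> acc A \<longleftrightarrow> accepts_from A p \<alpha>"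
proof -
  obtain z where z: "D_equiv (\<delta> s z) p"
    using assms(1) unfolding D_reach_def by blast
  then have "accepts_from A (\<delta> s z) \<alpha> \<longleftrightarrow> accepts_from A p \<alpha>"
    using assms(2) unfolding D_equiv_def by blast
  moreover obtain n
    where n: "\<delta> (\<delta> s z) (prefix n \<alpha>) \<in> acc A \<longleftrightarrow> accepts_from A (\<delta> s z) \<alpha>"
    using ex_prefix_acc_iff_accepts_from[of A "\<delta> s z" \<alpha>] by blast
  moreover have "reach A s (\<delta> (\<delta> s z) (prefix n \<alpha>))"
    using reach_trans_star[of A s "z @ prefix n \<alpha>"] by (simp add: trans_star_append)
  moreover have "D_reach (\<delta> (\<delta> s z) (prefix n \<alpha>)) p"
  proof (rule D_reach_D_equiv_left[OF D_equiv_trans_star[OF z]])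
    show "D_reach (\<delta> p (prefix n \<alpha>)) p"
      using assms(3) reach_imp_D_reach unfolding recurrent_def by blast
  qed
  ultimately show thesis
    using that by blast
qed

lemma D_scc_not_mixed:
  assumes "p1 \<in> states A" "D_reach p1 p2" "D_reach p2 p1"
    and "\<alpha>1 \<notin> D" "recurrent p1 \<alpha>1" "accepts_from A p1 \<alpha>1"
    and "\<alpha>2 \<notin> D" "recurrent p2 \<alpha>2" "\<not> accepts_from A p2 \<alpha>2"
  shows False
proof -
  let ?X = "{s \<in> states A. D_reach s p1}"
  have "?X = {}"
  proof (rule wdba_no_mixed_trap[OF wdba])
    show "?X \<subseteq> states A" by blast
  next
    fix s assume s: "s \<in> ?X"
    then obtain t where t: "reach A s t" "D_reach t p1" "t \<in> acc A"
      using D_reach_via_recurrent[of s p1 \<alpha>1] assms(4-6) by blast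
    moreover have "t \<in> states A"
      using s t(1) reach_in_states[OF dba] by blast
    ultimately show "\<exists>t\<in>?X \<inter> acc A. reach A s t"
      by blast
  next
    fix s assume s: "s \<in> ?X"
    then have "D_reach s p2"
      using D_reach_trans[OF _ assms(2)] by blast
    then obtain t where t: "reach A s t" "D_reach t p2" "t \<notin> acc A"
      using D_reach_via_recurrent[of s p2 \<alpha>2] assms(7-9) by blast
    moreover have "D_reach t p1"
      by (rule D_reach_trans[OF t(2) assms(3)])
    moreover have "t \<in> states A"
      using s t(1) reach_in_states[OF dba] by blast
    ultimately show "\<exists>t\<in>?X - acc A. reach A s t"
      by blast
  qed
  then show False
    using assms(1) D_reach_refl by blast
qed

definition rep :: "'q \<Rightarrow> 'q" where
  "rep q = (SOME r. r \<in> states A \<and> D_equiv r q)"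

lemma rep_in_states_D_equiv: "q \<in> states A \<Longrightarrow> rep q \<in> states A \<and> D_equiv (rep q) q"
  unfolding rep_def by (rule someI[of _ q]) simp

lemma rep_eq_iff:
  assumes "p \<in> states A" "q \<in> states A"
  shows "rep p = rep q \<longleftrightarrow> D_equiv p q"
proof
  assume "rep p = rep q"
  then show "D_equiv p q"
    using rep_in_states_D_equiv[OF assms(1)] rep_in_states_D_equiv[OF assms(2)]
    by (metis D_equiv_sym D_equiv_trans)
next
  assume "D_equiv p q"
  then have "(\<lambda>r. r \<in> states A \<and> D_equiv r p) = (\<lambda>r. r \<in> states A \<and> D_equiv r q)"
    by (metis D_equiv_sym D_equiv_trans)
  then show "rep p = rep q"
    unfolding rep_def by simp
qed

lemma rep_\<delta>_rep: "q \<in> states A \<Longrightarrow> rep (\<delta> (rep q) u) = rep (\<delta> q u)"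
  using rep_in_states_D_equiv D_equiv_trans_star rep_eq_iff \<delta>_in_states by metis

text \<open>D_reach r p \<and> D_reach p r says that r and p lie in the same SCC of the quotient.
  By D_scc_not_mixed, no state of that SCC recurrently rejects a word outside D.\<close>

definition D_accepting :: "'q \<Rightarrow> bool" where
  "D_accepting r \<longleftrightarrow> (\<exists>p\<in>states A. \<exists>\<alpha>. \<alpha> \<notin> D \<and> recurrent p \<alpha> \<and> accepts_from A p \<alpha>
     \<and> D_reach r p \<and> D_reach p r)"

definition D_quotient :: "('q, 'a) dba" where
  "D_quotient = \<lparr>states = rep ` states A, trans = (\<lambda>r a. rep (trans A r a)),
     init = rep (init A), acc = {r \<in> rep ` states A. D_accepting r}\<rparr>"

lemma trans_star_D_quotient:
  "r \<in> rep ` states A \<Longrightarrow> trans_star (trans D_quotient) r u = rep (\<delta> r u)"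
proof (induction u arbitrary: r)
  case Nil
  then show ?case
    using rep_\<delta>_rep[of _ "[]"] by auto
next
  case (Cons a u)
  then obtain q where q: "q \<in> states A" "r = rep q"
    by blast
  then have r: "r \<in> states A"
    using rep_in_states_D_equiv by blast
  then have "trans A r a \<in> states A"
    using \<delta>_in_states[of r "[a]"] by simp
  then show ?case
    using Cons.IH rep_\<delta>_rep by (simp add: D_quotient_def)
qed

lemma run_D_quotient: "run D_quotient w n = rep (run A w n)"
proof -
  have "run D_quotient w n = rep (\<delta> (rep (init A)) (prefix n w))"
    using trans_star_D_quotient init_in_states by (simp add: run_eq_trans_star D_quotient_def)
  then show ?thesis
    by (simp add: rep_\<delta>_rep[OF init_in_states] run_eq_trans_star)
qed

lemma is_dba_D_quotient: "is_dba D_quotient"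
  unfolding is_dba_def
proof (intro conjI ballI allI)
  show "finite (states D_quotient)" "init D_quotient \<in> states D_quotient"
    "acc D_quotient \<subseteq> states D_quotient"
    using finite_states init_in_states by (auto simp: D_quotient_def)
next
  fix r a assume "r \<in> states D_quotient"
  then show "trans D_quotient r a \<in> states D_quotient"
    using rep_in_states_D_equiv \<delta>_in_states[of _ "[a]"] by (auto simp: D_quotient_def)
next
  fix r assume "r \<in> states D_quotient"
  then obtain q where q: "q \<in> states A" "r = rep q"
    by (auto simp: D_quotient_def)
  obtain u where "\<delta> (init A) u = q"
    using ex_access_word[OF q(1)] by blast
  then have "trans_star (trans D_quotient) (init D_quotient) u = r"
    using trans_star_D_quotient rep_\<delta>_rep init_in_states q(2) by (simp add: D_quotient_def)
  then show "\<exists>u. trans_star (trans D_quotient) (init D_quotient) u = r"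
    by blast
qed

lemma reach_D_quotient:
  assumes "r \<in> rep ` states A" "reach D_quotient r r'"
  shows "r' \<in> rep ` states A" "D_reach r r'"
proof -
  obtain u where u: "r' = rep (\<delta> r u)"
    using assms trans_star_D_quotient unfolding reach_def by metis
  have "\<delta> r u \<in> states A"
    using assms(1) rep_in_states_D_equiv \<delta>_in_states by blast
  then show "r' \<in> rep ` states A" "D_reach r r'"
    using u rep_in_states_D_equiv D_equiv_sym unfolding D_reach_def by blast+
qed

lemma is_wdba_D_quotient: "is_wdba D_quotient"
  unfolding is_wdba_iff[OF is_dba_D_quotient]
proof (intro ballI allI impI)
  fix r r' assume r: "r \<in> states D_quotient"
    and rr': "reach D_quotient r r' \<and> reach D_quotient r' r"
  then have "r \<in> rep ` states A"
    by (simp add: D_quotient_def)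
  then have "r' \<in> rep ` states A" "D_reach r r'" "D_reach r' r"
    using reach_D_quotient rr' by blast+
  moreover have "D_accepting r \<longleftrightarrow> D_accepting r'"
    using \<open>D_reach r r'\<close> \<open>D_reach r' r\<close> D_reach_trans unfolding D_accepting_def by meson
  ultimately show "r \<in> acc D_quotient \<longleftrightarrow> r' \<in> acc D_quotient"
    using \<open>r \<in> rep ` states A\<close> by (simp add: D_quotient_def)
qed

lemma recurrent_state_of_run:
  assumes "\<exists>\<^sub>\<infinity>n. P (run A \<alpha> n)"
  obtains p m where "p \<in> states A" "P p" "\<exists>\<^sub>\<infinity>n. run A \<alpha> n = p"
    "recurrent p (suffix m \<alpha>)" "accepts_from A p (suffix m \<alpha>) \<longleftrightarrow> \<alpha> \<in> dba_lang A"
proof -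
  obtain p where p: "p \<in> states A" "P p" "\<exists>\<^sub>\<infinity>n. run A \<alpha> n = p"
    using INFM_finite_range_value[OF finite_states run_in_states[OF dba] assms] by blast
  then obtain m where m: "run A \<alpha> m = p"
    using INFM_EX by blast
  have "recurrent p (suffix m \<alpha>)"
    using recurrent_suffix p(3) m by (simp add: run_eq_trans_star)
  moreover have "finite (acc A)"
    using dba finite_subset unfolding is_dba_def by blast
  then have "accepts_from A p (suffix m \<alpha>) \<longleftrightarrow> \<alpha> \<in> dba_lang A"
    using accepts_from_suffix[of A "init A" \<alpha> m] m
    by (simp add: dba_lang_iff_accepts_from run_eq_trans_star)
  ultimately show thesis
    using that p by blast
qed

lemma dba_lang_D_quotient_if:
  assumes "\<alpha> \<notin> D" "\<alpha> \<in> dba_lang A"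
  shows "\<alpha> \<in> dba_lang D_quotient"
proof -
  obtain p m where p: "p \<in> states A" "\<exists>\<^sub>\<infinity>n. run A \<alpha> n = p"
    "recurrent p (suffix m \<alpha>)" "accepts_from A p (suffix m \<alpha>) \<longleftrightarrow> \<alpha> \<in> dba_lang A"
    by (rule recurrent_state_of_run[of "\<lambda>_. True" \<alpha>]) auto
  have "D_equiv (rep p) p"
    using rep_in_states_D_equiv[OF p(1)] by blast
  then have "D_reach (rep p) p" "D_reach p (rep p)"
    using D_reach_D_equiv_left D_reach_D_equiv_right D_reach_refl D_equiv_sym by blast+
  then have "rep p \<in> acc D_quotient"
    using p assms(2) suffix_notin_D[OF assms(1)] unfolding D_quotient_def D_accepting_def by auto
  moreover have "\<exists>\<^sub>\<infinity>n. run D_quotient \<alpha> n = rep p"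
    using p(2) by (rule INFM_mono) (simp add: run_D_quotient)
  ultimately show ?thesis
    unfolding dba_lang_def by blast
qed

lemma dba_lang_if_D_quotient:
  assumes "\<alpha> \<notin> D" "\<alpha> \<in> dba_lang D_quotient"
  shows "\<alpha> \<in> dba_lang A"
proof (rule ccontr)
  assume rejected: "\<alpha> \<notin> dba_lang A"
  obtain r where r: "r \<in> acc D_quotient" "\<exists>\<^sub>\<infinity>n. rep (run A \<alpha> n) = r"
    using assms(2) unfolding dba_lang_def run_D_quotient by blast
  then obtain p2 m where p2: "p2 \<in> states A" "rep p2 = r"
    "recurrent p2 (suffix m \<alpha>)" "\<not> accepts_from A p2 (suffix m \<alpha>)"
    using recurrent_state_of_run[of "\<lambda>p. rep p = r"] rejected by metis
  obtain p1 \<alpha>1 where p1: "p1 \<in> states A" "\<alpha>1 \<notin> D" "recurrent p1 \<alpha>1" "accepts_from A p1 \<alpha>1"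
    "D_reach r p1" "D_reach p1 r"
    using r(1) unfolding D_quotient_def D_accepting_def by auto
  have "D_equiv p2 r"
    using rep_in_states_D_equiv[OF p2(1)] p2(2) D_equiv_sym by blast
  then have "D_reach p2 p1" "D_reach p1 p2"
    using D_reach_D_equiv_left[OF _ p1(5)] D_reach_D_equiv_right[OF p1(6)] D_equiv_sym by blast+
  then show False
    using D_scc_not_mixed p1 p2 suffix_notin_D[OF assms(1)] by blast
qed

lemma card_D_quotient_less:
  assumes "p \<in> states A" "q \<in> states A" "p \<noteq> q" "D_equiv p q"
  shows "card (states D_quotient) < card (states A)"
proof -
  have "\<not> inj_on rep (states A)"
    using assms rep_eq_iff unfolding inj_on_def by blast
  then have "card (rep ` states A) \<noteq> card (states A)"
    using inj_on_iff_eq_card[OF finite_states] by blast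
  moreover have "card (rep ` states A) \<le> card (states A)"
    by (rule card_image_le[OF finite_states])
  ultimately show ?thesis
    by (simp add: D_quotient_def)
qed

lemma D_minimal_imp_D_equiv_eq:
  assumes "D_minimal D A" "p \<in> states A" "q \<in> states A" "D_equiv p q"
  shows "p = q"
proof (rule ccontr)
  assume "p \<noteq> q"
  obtain C :: "(nat, 'a) dba"
    where C: "is_wdba C" "card (states C) = card (states D_quotient)" "dba_lang C = dba_lang D_quotient"
    by (rule ex_nat_wdba_eq_lang[OF is_wdba_D_quotient])
  have "eq_mod D (dba_lang C) (dba_lang A)"
    unfolding eq_mod_def C(3) using dba_lang_D_quotient_if dba_lang_if_D_quotient by blast
  moreover have "card (states C) < card (states A)"
    using C(2) card_D_quotient_less assms(2-4) \<open>p \<noteq> q\<close> by simp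
  ultimately show False
    using assms(1) C(1) unfolding D_minimal_def by blast
qed

definition access_class :: "'q \<Rightarrow> 'a list set" where
  "access_class q = {v. D_equiv q (\<delta> (init A) v)}"

lemma cong_LD_class: "cong_LD (dba_lang A) D `` {u} = access_class (\<delta> (init A) u)"
  unfolding access_class_def using cong_LD_iff_D_equiv by auto

lemma access_class_image: "access_class ` states A = TLD_states (dba_lang A) D"
proof -
  have "states A = range (\<delta> (init A))"
    using \<delta>_in_states[OF init_in_states] ex_access_word by blast
  then show ?thesis
    unfolding TLD_states_def quotient_def cong_LD_class by auto
qed

context
  assumes D_equiv_eq: "\<And>p q. p \<in> states A \<Longrightarrow> q \<in> states A \<Longrightarrow> D_equiv p q \<Longrightarrow> p = q"
begin

lemma inj_on_access_class: "inj_on access_class (states A)"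
proof
  fix p q assume pq: "p \<in> states A" "q \<in> states A" "access_class p = access_class q"
  obtain u where u: "\<delta> (init A) u = q"
    using ex_access_word pq(2) by blast
  then have "u \<in> access_class p"
    using pq(3) unfolding access_class_def by simp
  then have "D_equiv p q"
    using u unfolding access_class_def by simp
  then show "p = q"
    using D_equiv_eq pq by blast
qed

lemma access_class_trans:
  assumes q: "q \<in> states A"
  shows "access_class (trans A q a) = TLD_trans (dba_lang A) D (access_class q) a"
proof -
  obtain u where "\<delta> (init A) u = q"
    using ex_access_word[OF q] by blast
  then have "u \<in> access_class q"
    unfolding access_class_def by simp
  then have "(SOME v. v \<in> access_class q) \<in> access_class q"
    by (rule someI)
  then have "D_equiv q (\<delta> (init A) (SOME v. v \<in> access_class q))"
    unfolding access_class_def by simp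
  then have "\<delta> (init A) (SOME v. v \<in> access_class q) = q"
    by (rule sym[OF D_equiv_eq[OF q \<delta>_in_states[OF init_in_states]]])
  then show ?thesis
    unfolding TLD_trans_def cong_LD_class by (simp add: trans_star_append)
qed

lemma informative_D_cong_if_D_equiv_eq: "informative_D_cong D A"
proof -
  have "access_class (init A) = TLD_init (dba_lang A) D"
    using cong_LD_class[of "[]"] by (simp add: TLD_init_def)
  then show ?thesis
    unfolding informative_D_cong_def ts_iso_def bij_betw_def
    using inj_on_access_class access_class_image access_class_trans by blast
qed

end

end

theorem theorem4:
  fixes A :: "('q, 'a::finite) dba" and D :: "'a word set"
  assumes "is_wdba A"
    and "omega_regular D"
    and "trivial_right_cong D"
  shows "D_minimal D A \<longleftrightarrow> informative_D_cong D A"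
proof -
  interpret wdba_dont_care A D
    using assms(1,3) by unfold_locales
  show ?thesis
    using D_minimal_if_informative_D_cong[OF assms(3)] informative_D_cong_if_D_equiv_eq
      D_minimal_imp_D_equiv_eq by blast
qed

end
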